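(* Let $G$ be the final graph produced by the uncoordinated construction (described in the context) on a finite point set $P\subset\mathbb{R}^d$ with parameter $s>1$. Then: (1) For any two distinct points $p,q\in P$ such that $pq$ is not an edge of $G$, there is an edge $p'q'$ of $G$ with $|pp'|\le |p'q'|/(2s+2)$ and $|qq'|\le |p'q'|/(2s+2)$. (2) For any two distinct edges $pq$ and $p'q'$ of $G$ such that $pq$ was built before $p'q'$, either $|pp'|>|pq|/(2s+2)$ or $|qq'|>|pq|/(2s+2)$.
   Context: Fix $d\ge 1$. Let $P\subset\mathbb{R}^d$ be a finite set of $n\ge 2$ points, $|xy|$ the Euclidean distance, and $s>1$ a parameter. Uncoordinated construction: start with the graph $G$ on vertex set $P$ with no edges (edges are undirected straight segments). Every ordered pair $(p,q)$ of distinct points of $P$ is processed exactly once, in a completely arbitrary order, and no two pairs are processed simultaneously. When $(p,q)$ is processed (by agent $p$), the edge $pq$ is added to $G$ unless $G$ currently contains an edge whose endpoints can be labeled $p',q'$ so that $|pp'|\le |p'q'|/(2s+2)$ and $|qq'|\le |p'q'|/(2s+2)$; in that case $pq$ is not built. The final graph $G$ is the graph after all ordered pairs have been processed. *)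

theory Defs
  imports "HOL-Analysis.Analysis"
begin

text \<open>Undirected edges are represented as two-element sets.
  An edge e blocks the pair (p,q) if its endpoints can be labelled p',q'
  with dist p p' and dist q q' both at most dist p' q' / (2s+2).\<close>
definition blocked :: "real \<Rightarrow> 'a::euclidean_space set set \<Rightarrow> 'a \<Rightarrow> 'a \<Rightarrow> bool" where
  "blocked s E p q \<longleftrightarrow> (\<exists>p' q'. {p', q'} \<in> E \<and>
      dist p p' \<le> dist p' q' / (2 * s + 2) \<and> dist q q' \<le> dist p' q' / (2 * s + 2))"

fun uncoord :: "real \<Rightarrow> ('a::euclidean_space \<times> 'a) list \<Rightarrow> 'a set list \<Rightarrow> 'a set list" where
  "uncoord s [] B = B"
| "uncoord s ((p, q) # rest) B =
     uncoord s rest (if blocked s (set B) p q then B else B @ [{p, q}])"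

definition valid_order :: "'a set \<Rightarrow> ('a \<times> 'a) list \<Rightarrow> bool" where
  "valid_order P L \<longleftrightarrow> distinct L \<and> set L = {(p, q). p \<in> P \<and> q \<in> P \<and> p \<noteq> q}"

definition built_before :: "'a set list \<Rightarrow> 'a set \<Rightarrow> 'a set \<Rightarrow> bool" where
  "built_before B e f \<longleftrightarrow> (\<exists>i j. i < j \<and> j < length B \<and> B ! i = e \<and> B ! j = f)"

end

theory Submission
  imports Defs
begin

text \<open>Part (1) holds because the pair \<open>(p, q)\<close> was processed at some point: either
  \<open>pq\<close> was built then, or an edge already present blocked it, and edges are never removed.
  Part (2) holds because the later edge \<open>p'q'\<close> was built when its processed pair was not
  blocked, in particular not by the earlier edge \<open>pq\<close>; since blocking is symmetric in the
  two endpoints, the orientation in which \<open>p'q'\<close> was processed does not matter.\<close>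

lemma blocked_mono: "blocked s E p q \<Longrightarrow> E \<subseteq> E' \<Longrightarrow> blocked s E' p q"
  unfolding blocked_def by blast

lemma blocked_sym: "blocked s E p q \<longleftrightarrow> blocked s E q p"
proof -
  have "blocked s E y x" if "blocked s E x y" for x y
  proof -
    from that obtain x' y' where "{x', y'} \<in> E"
      and "dist x x' \<le> dist x' y' / (2 * s + 2)" "dist y y' \<le> dist x' y' / (2 * s + 2)"
      unfolding blocked_def by blast
    then have "{y', x'} \<in> E \<and>
        dist y y' \<le> dist y' x' / (2 * s + 2) \<and> dist x x' \<le> dist y' x' / (2 * s + 2)"
      by (simp add: insert_commute dist_commute)
    then show ?thesis unfolding blocked_def by blast
  qed
  then show ?thesis by blast
qed

lemma not_blocked_by_edge:
  assumes "\<not> blocked s E x y" and "{p, q} \<in> E"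
  shows "dist x p > dist p q / (2 * s + 2) \<or> dist y q > dist p q / (2 * s + 2)"
  using assms unfolding blocked_def not_le[symmetric] by blast

lemma uncoord_extends: "\<exists>xs. uncoord s L B = B @ xs"
proof (induction L arbitrary: B)
  case Nil
  then show ?case by simp
next
  case (Cons pq rest)
  obtain p q where "pq = (p, q)" by fastforce
  then show ?case
    using Cons.IH[of B] Cons.IH[of "B @ [{p, q}]"] by auto
qed

lemma uncoord_processed:
  assumes "(p, q) \<in> set L"
  shows "{p, q} \<in> set (uncoord s L B) \<or> blocked s (set (uncoord s L B)) p q"
  using assms
proof (induction L arbitrary: B)
  case Nil
  then show ?case by simp
next
  case (Cons pq rest)
  obtain a b where pq: "pq = (a, b)" by fastforce
  define B' where "B' = (if blocked s (set B) a b then B else B @ [{a, b}])"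
  have step: "uncoord s (pq # rest) B = uncoord s rest B'"
    using pq B'_def by simp
  show ?case
  proof (cases "(p, q) \<in> set rest")
    case True
    then show ?thesis using Cons.IH[of B'] step by simp
  next
    case False
    then have "(p, q) = (a, b)" using Cons.prems pq by auto
    moreover obtain xs where "uncoord s rest B' = B' @ xs" using uncoord_extends by blast
    ultimately show ?thesis
      using step B'_def blocked_mono[of s "set B" p q] by auto
  qed
qed

lemma uncoord_nth_not_blocked:
  assumes "length B \<le> j" and "j < length (uncoord s L B)"
    and "uncoord s L B ! j = {p, q}"
  shows "\<not> blocked s (set (take j (uncoord s L B))) p q"
  using assms
proof (induction L arbitrary: B)
  case Nil
  then show ?case by simp
next
  case (Cons pq rest)
  obtain a b where pq: "pq = (a, b)" by fastforce
  show ?case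
  proof (cases "blocked s (set B) a b")
    case True
    then show ?thesis using Cons.IH[of B] Cons.prems pq by simp
  next
    case not_blocked: False
    let ?B' = "B @ [{a, b}]"
    have step: "uncoord s (pq # rest) B = uncoord s rest ?B'"
      using not_blocked pq by simp
    show ?thesis
    proof (cases "j = length B")
      case True
      obtain xs where xs: "uncoord s rest ?B' = ?B' @ xs" using uncoord_extends by blast
      then have "{p, q} = {a, b}" and "take j (uncoord s rest ?B') = B"
        using Cons.prems step True by (simp_all add: nth_append)
      then show ?thesis
        using not_blocked step blocked_sym[of s "set B" a b]
        by (auto simp: doubleton_eq_iff)
    next
      case False
      then show ?thesis using Cons.IH[of ?B'] Cons.prems step by simp
    qed
  qed
qed

theorem lemma1:
  fixes P :: "'a::euclidean_space set" and s :: real and L :: "('a \<times> 'a) list"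
  assumes "finite P" and "card P \<ge> 2" and "s > 1" and "valid_order P L"
  defines "B \<equiv> uncoord s L []"
  shows "(\<forall>p\<in>P. \<forall>q\<in>P. p \<noteq> q \<and> {p, q} \<notin> set B \<longrightarrow>
            (\<exists>p' q'. {p', q'} \<in> set B \<and>
               dist p p' \<le> dist p' q' / (2 * s + 2) \<and> dist q q' \<le> dist p' q' / (2 * s + 2)))
       \<and> (\<forall>p q p' q'. {p, q} \<in> set B \<and> {p', q'} \<in> set B \<and> {p, q} \<noteq> {p', q'} \<and>
            built_before B {p, q} {p', q'} \<longrightarrow>
            dist p p' > dist p q / (2 * s + 2) \<or> dist q q' > dist p q / (2 * s + 2))"
proof (intro conjI allI ballI impI)
  fix p q
  assume "p \<in> P" "q \<in> P" and "p \<noteq> q \<and> {p, q} \<notin> set B"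
  moreover from this have "(p, q) \<in> set L"
    using assms(4) unfolding valid_order_def by auto
  ultimately have "blocked s (set B) p q"
    using uncoord_processed[of p q L s "[]"] B_def by auto
  then show "\<exists>p' q'. {p', q'} \<in> set B \<and>
               dist p p' \<le> dist p' q' / (2 * s + 2) \<and> dist q q' \<le> dist p' q' / (2 * s + 2)"
    unfolding blocked_def by blast
next
  fix p q p' q'
  assume "{p, q} \<in> set B \<and> {p', q'} \<in> set B \<and> {p, q} \<noteq> {p', q'} \<and>
            built_before B {p, q} {p', q'}"
  then obtain i j where ij: "i < j" "j < length B" "B ! i = {p, q}" "B ! j = {p', q'}"
    unfolding built_before_def by blast
  then have "\<not> blocked s (set (take j B)) p' q'"
    using uncoord_nth_not_blocked[of "[]" j s L] B_def by simp
  moreover have "{p, q} \<in> set (take j B)"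
    using ij by (metis in_set_conv_nth length_take min.absorb4 nth_take)
  ultimately show "dist p p' > dist p q / (2 * s + 2) \<or> dist q q' > dist p q / (2 * s + 2)"
    using not_blocked_by_edge by (simp add: dist_commute)
qed

end
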